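(* Let $\xi\in\mathbb{R}\setminus\mathbb{Q}$, let $n\ge1$ be an integer, and let $q$ be the denominator of a convergent of the continued fraction expansion of $\xi$. Then the last (i.e. $(n+1)$-st) successive minimum of the convex body $\mathcal{C}(q)$ with respect to the lattice $\mathbb{Z}[T]_{\le n}$ is $\le 2^n$, and its first successive minimum is $\ge \left(2^{n^2}(n+1)!\right)^{-1}$. Moreover, the convex body $2^n\mathcal{C}(q)$ contains a basis of $\mathbb{Z}[T]_{\le n}$ over $\mathbb{Z}$.
   Context: $\mathbb{R}[T]_{\le n}$ denotes the real vector space of polynomials in $\mathbb{R}[T]$ of degree $\le n$, and $\mathbb{Z}[T]_{\le n}$ its subgroup of polynomials with integer coefficients (a lattice of rank $n+1$, identified with $\mathbb{Z}^{n+1}$ via coefficients). For $P \in \mathbb{R}[T]$ and $k\ge0$, $P^{[k]}(\xi) = P^{(k)}(\xi)/k!$ is the $k$-th divided derivative (the coefficient of $(T-\xi)^k$ in the Taylor expansion of $P$ at $\xi$). For an integer $q\ge1$, $\mathcal{C}(q)$ is the convex body of all $P \in \mathbb{R}[T]_{\le n}$ with $|P^{[k]}(\xi)| \le q^{2k-n}$ for $0\le k\le n$. The successive minima $\lambda_1\le\dots\le\lambda_{n+1}$ of a convex body $\mathcal{C}$ with respect to a lattice $\Lambda$ are defined by: $\lambda_i$ is the smallest $\lambda>0$ such that $\lambda\mathcal{C}$ contains $i$ linearly independent elements of $\Lambda$. *)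

theory Defs
  imports "HOL-Analysis.Analysis" "HOL-Computational_Algebra.Polynomial"
begin

fun cf_rem :: "real \<Rightarrow> nat \<Rightarrow> real" where
  "cf_rem x 0 = x"
| "cf_rem x (Suc k) = 1 / (cf_rem x k - of_int \<lfloor>cf_rem x k\<rfloor>)"

definition cf_pq :: "real \<Rightarrow> nat \<Rightarrow> int" where
  "cf_pq x k = \<lfloor>cf_rem x k\<rfloor>"

text \<open>Denominators of convergents: q_(-1) = 0, q_0 = 1, q_(k+1) = a_(k+1) q_k + q_(k-1).\<close>
fun cf_den :: "real \<Rightarrow> nat \<Rightarrow> int" where
  "cf_den x 0 = 1"
| "cf_den x (Suc 0) = cf_pq x 1"
| "cf_den x (Suc (Suc k)) = cf_pq x (Suc (Suc k)) * cf_den x (Suc k) + cf_den x k"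

definition convergent_denominator :: "real \<Rightarrow> nat \<Rightarrow> bool" where
  "convergent_denominator x q \<longleftrightarrow> (\<exists>k. int q = cf_den x k)"

definition divided_deriv :: "nat \<Rightarrow> real poly \<Rightarrow> real \<Rightarrow> real" where
  "divided_deriv k P x = poly ((pderiv ^^ k) P) x / fact k"

definition int_polys :: "nat \<Rightarrow> real poly set" where
  "int_polys n = {P. degree P \<le> n \<and> (\<forall>i. coeff P i \<in> \<int>)}"

definition conv_body :: "nat \<Rightarrow> real \<Rightarrow> nat \<Rightarrow> real poly set" where
  "conv_body n x q = {P. degree P \<le> n \<and>
      (\<forall>k\<le>n. \<bar>divided_deriv k P x\<bar> \<le> real q powi (2 * int k - int n))}"

definition scale_body :: "real \<Rightarrow> real poly set \<Rightarrow> real poly set" where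
  "scale_body l C = (\<lambda>P. smult l P) ` C"

definition real_lin_indep :: "real poly set \<Rightarrow> bool" where
  "real_lin_indep S \<longleftrightarrow> finite S \<and>
     (\<forall>c::real poly \<Rightarrow> real. (\<Sum>p\<in>S. smult (c p) p) = 0 \<longrightarrow> (\<forall>p\<in>S. c p = 0))"

definition succ_min :: "real poly set \<Rightarrow> real poly set \<Rightarrow> nat \<Rightarrow> real" where
  "succ_min L C i = Inf {l. l > 0 \<and> (\<exists>S. S \<subseteq> L \<inter> scale_body l C \<and> card S = i \<and> real_lin_indep S)}"

definition is_Z_basis :: "real poly set \<Rightarrow> real poly set \<Rightarrow> bool" where
  "is_Z_basis B L \<longleftrightarrow> finite B \<and> B \<subseteq> L \<and>
     (\<forall>c::real poly \<Rightarrow> int. (\<Sum>p\<in>B. smult (of_int (c p)) p) = 0 \<longrightarrow> (\<forall>p\<in>B. c p = 0)) \<and>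
     (\<forall>P\<in>L. \<exists>c::real poly \<Rightarrow> int. P = (\<Sum>p\<in>B. smult (of_int (c p)) p))"

end

theory Submission
  imports Defs
begin

(* Let q = q_k be a convergent denominator of the irrational \<xi> and let
   p, r, s be integers with r = q_(k-1), p/q and s/r consecutive convergents, so that
   |q\<xi> - p| \<le> 1/q, |r\<xi> - s| \<le> 1/q, 0 \<le> r \<le> q and pr - qs = \<plusminus>1.  Put U = qT - p and
   V = rT - s.  Because the substitution (X, Y) \<mapsto> (U, V) is unimodular, the polynomials
   Q_j = U^(n-j) V^j (0 \<le> j \<le> n) form a Z-basis of Z[T]_{\<le>n}; the coordinates of a polynomial
   in this basis are obtained by evaluating the inverse binary form.
   Taylor-expanding at \<xi>, U and V become linear polynomials whose constant term is at most
   1/q and whose leading coefficient is at most q, whence |Q_j^[k](\<xi>)| \<le> 2^n q^(2k-n): the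
   basis lies in 2^n C(q), giving the bound on \<lambda>_(n+1) and the basis statement.
   Conversely, if 0 \<noteq> P \<in> Z[T]_{\<le>n} lies in l C(q), the inverse form bounds its (integer,
   not all zero) coordinates by (n+1) 2^n l, so 1 \<le> (n+1) 2^n l, which bounds \<lambda>_1. *)

section \<open>Divided derivatives are Taylor coefficients\<close>

lemma higher_pderiv_pcompose_shift:
  "(pderiv ^^ k) (pcompose P [:x, 1:]) = pcompose ((pderiv ^^ k) P) [:x, 1::real:]"
  by (induction k) (simp_all add: pderiv_pcompose pderiv_pCons)

text \<open>\<open>P^[k](x)\<close> is the \<open>k\<close>-th coefficient of \<open>P(T + x)\<close>; this turns all conditions
  defining \<open>C(q)\<close> into bounds on coefficients.\<close>
lemma divided_deriv_taylor:
  "divided_deriv k P x = coeff (pcompose P [:x, 1:]) k"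
proof -
  have "coeff ((pderiv ^^ k) (pcompose P [:x, 1:])) 0 = fact k * coeff (pcompose P [:x, 1:]) k"
    by (simp add: coeff_higher_pderiv pochhammer_fact)
  moreover have "coeff ((pderiv ^^ k) (pcompose P [:x, 1:])) 0 = poly ((pderiv ^^ k) P) x"
    by (simp add: higher_pderiv_pcompose_shift poly_0_coeff_0[symmetric] poly_pcompose)
  ultimately show ?thesis by (simp add: divided_deriv_def)
qed

lemma divided_deriv_smult: "divided_deriv k (smult c P) x = c * divided_deriv k P x"
  by (simp add: divided_deriv_taylor pcompose_smult)

section \<open>Continued fractions\<close>

text \<open>Numerators and denominators of the convergents with the index shifted by two, so that
  the recursion starts from \<open>p_(-2) = 0, p_(-1) = 1\<close> and \<open>q_(-2) = 1, q_(-1) = 0\<close>.\<close>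
fun cf_numer :: "real \<Rightarrow> nat \<Rightarrow> int" where
  "cf_numer x 0 = 0" | "cf_numer x (Suc 0) = 1"
| "cf_numer x (Suc (Suc k)) = cf_pq x k * cf_numer x (Suc k) + cf_numer x k"

fun cf_denom :: "real \<Rightarrow> nat \<Rightarrow> int" where
  "cf_denom x 0 = 1" | "cf_denom x (Suc 0) = 0"
| "cf_denom x (Suc (Suc k)) = cf_pq x k * cf_denom x (Suc k) + cf_denom x k"

lemma cf_den_eq_cf_denom: "cf_den x m = cf_denom x (m + 2)"
  by (induction x m rule: cf_den.induct) (simp_all add: numeral_eq_Suc)

lemma cf_rem_irrational: assumes "x \<notin> \<rat>" shows "cf_rem x k \<notin> \<rat>"
proof (induction k)
  case 0 then show ?case using assms by simp
next
  case (Suc k)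
  let ?y = "cf_rem x k"
  show ?case
  proof
    assume "cf_rem x (Suc k) \<in> \<rat>"
    hence "1 / cf_rem x (Suc k) \<in> \<rat>" by (rule Rats_divide[OF Rats_1])
    hence "?y - of_int \<lfloor>?y\<rfloor> + of_int \<lfloor>?y\<rfloor> \<in> \<rat>" by (intro Rats_add) auto
    with Suc show False by simp
  qed
qed

lemma cf_rem_gt1: assumes "x \<notin> \<rat>" shows "cf_rem x (Suc k) > 1"
proof -
  let ?y = "cf_rem x k"
  have "?y \<noteq> of_int \<lfloor>?y\<rfloor>" using cf_rem_irrational[OF assms, of k] by (metis Rats_of_int)
  hence "0 < ?y - of_int \<lfloor>?y\<rfloor>" by linarith
  moreover have "?y - of_int \<lfloor>?y\<rfloor> < 1" by linarith
  ultimately show ?thesis by simp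
qed

lemma cf_pq_ge1: assumes "x \<notin> \<rat>" shows "cf_pq x (Suc k) \<ge> 1"
  using cf_rem_gt1[OF assms, of k] unfolding cf_pq_def by linarith

lemma cf_denom_mono:
  assumes "x \<notin> \<rat>" shows "0 \<le> cf_denom x k \<and> (k \<ge> 1 \<longrightarrow> cf_denom x k \<le> cf_denom x (Suc k))"
proof (induction k rule: nat_less_induct)
  case (1 k)
  show ?case
  proof (cases k)
    case (Suc j)
    show ?thesis
    proof (cases j)
      case (Suc i)
      have IH: "0 \<le> cf_denom x j" "cf_denom x j \<le> cf_denom x k"
        using "1" \<open>k = Suc j\<close> Suc by auto
      have "cf_pq x j \<ge> 1" using cf_pq_ge1[OF assms, of i] Suc by simp
      hence "cf_denom x k \<le> cf_pq x j * cf_denom x k"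
        using IH \<open>k = Suc j\<close> Suc by (simp add: mult_le_cancel_right1)
      then show ?thesis using IH \<open>k = Suc j\<close> Suc by simp
    qed (use Suc in simp)
  qed simp
qed

lemma cf_denom_ge1: assumes "x \<notin> \<rat>" shows "cf_denom x (Suc (Suc k)) \<ge> 1"
proof (induction k)
  case (Suc k) then show ?case using cf_denom_mono[OF assms, of "Suc (Suc k)"] by simp
qed simp

lemma cf_complete_quotient_identity:
  assumes "x \<notin> \<rat>"
  shows "x * (cf_denom x (Suc k) * cf_rem x k + cf_denom x k)
       = cf_numer x (Suc k) * cf_rem x k + cf_numer x k"
proof (induction k)
  case 0 then show ?case by simp
next
  case (Suc k)
  let ?z = "cf_rem x (Suc k)" and ?a = "real_of_int (cf_pq x k)"
  have z: "?z > 0" using cf_rem_gt1[OF assms, of k] by linarith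
  have e: "cf_rem x k = ?a + 1 / ?z" by (simp add: cf_pq_def)
  let ?B1 = "real_of_int (cf_denom x (Suc k))" and ?B0 = "real_of_int (cf_denom x k)"
  let ?A1 = "real_of_int (cf_numer x (Suc k))" and ?A0 = "real_of_int (cf_numer x k)"
  have "x * ((?a * ?B1 + ?B0) * ?z + ?B1) / ?z = x * (?B1 * (?a + 1 / ?z) + ?B0)"
    using z by (simp add: field_simps)
  also have "\<dots> = ?A1 * (?a + 1 / ?z) + ?A0" using Suc.IH unfolding e .
  also have "\<dots> = ((?a * ?A1 + ?A0) * ?z + ?A1) / ?z" using z by (simp add: field_simps)
  finally have "x * ((?a * ?B1 + ?B0) * ?z + ?B1) = (?a * ?A1 + ?A0) * ?z + ?A1"
    using z by (simp add: divide_cancel_right)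
  then show ?case by (simp del: cf_rem.simps)
qed

lemma cf_det: "cf_numer x (Suc k) * cf_denom x k - cf_numer x k * cf_denom x (Suc k) = (-1) ^ k"
  by (induction k) (simp_all add: algebra_simps)

lemma cf_approx:
  assumes irr: "x \<notin> \<rat>"
  shows "\<bar>real_of_int (cf_denom x (Suc k)) * x - cf_numer x (Suc k)\<bar> * cf_denom x (Suc (Suc k)) \<le> 1"
proof -
  let ?D = "cf_denom x (Suc k) * cf_rem x k + cf_denom x k"
  let ?e = "real_of_int (cf_denom x (Suc k)) * x - cf_numer x (Suc k)"
  have "?e * ?D = cf_denom x (Suc k) * (x * ?D) - cf_numer x (Suc k) * ?D"
    by (simp add: algebra_simps)
  also have "\<dots> = - real_of_int (cf_numer x (Suc k) * cf_denom x k - cf_numer x k * cf_denom x (Suc k))"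
    unfolding cf_complete_quotient_identity[OF irr] by (simp add: algebra_simps)
  finally have err: "\<bar>?e\<bar> * \<bar>?D\<bar> = 1" by (simp add: cf_det flip: abs_mult)
  have B: "cf_denom x (Suc k) \<ge> 0" "cf_denom x k \<ge> 0" using cf_denom_mono[OF irr] by auto
  have "real_of_int (cf_pq x k) \<le> cf_rem x k" unfolding cf_pq_def by linarith
  hence "real_of_int (cf_pq x k) * cf_denom x (Suc k) \<le> cf_rem x k * cf_denom x (Suc k)"
    using B by (intro mult_right_mono) auto
  hence "real_of_int (cf_denom x (Suc (Suc k))) \<le> ?D" by (simp add: mult.commute)
  hence "\<bar>?e\<bar> * cf_denom x (Suc (Suc k)) \<le> \<bar>?e\<bar> * \<bar>?D\<bar>" by (intro mult_left_mono) auto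
  thus ?thesis using err by simp
qed

text \<open>The data attached to a convergent denominator \<open>q = q_k\<close>: with \<open>p = p_k\<close>,
  \<open>r = q_(k-1)\<close>, \<open>s = p_(k-1)\<close> both \<open>q x - p\<close> and \<open>r x - s\<close> are at most \<open>1/q\<close>.\<close>
lemma convergent_denominator_data:
  fixes x :: real
  assumes irr: "x \<notin> \<rat>" and cd: "convergent_denominator x q"
  obtains p r s :: int where "q \<ge> 1" "0 \<le> r" "r \<le> int q"
    "\<bar>real q * x - real_of_int p\<bar> \<le> 1 / real q" "\<bar>real_of_int r * x - real_of_int s\<bar> \<le> 1 / real q"
    "\<bar>p * r - int q * s\<bar> = 1"
proof -
  obtain m where qm: "int q = cf_denom x (Suc (Suc m))"
    using cd cf_den_eq_cf_denom unfolding convergent_denominator_def by (metis add_2_eq_Suc')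
  have q1: "q \<ge> 1" using qm cf_denom_ge1[OF irr, of m] by simp
  hence qpos: "real q > 0" by simp
  have rq: "real_of_int (cf_denom x (Suc (Suc m))) = real q" using qm by (metis of_int_of_nat_eq)
  have mono: "0 \<le> cf_denom x (Suc m)" "cf_denom x (Suc m) \<le> int q"
    using cf_denom_mono[OF irr, of "Suc m"] qm by auto
  have "cf_denom x (Suc (Suc m)) \<le> cf_denom x (Suc (Suc (Suc m)))"
    using cf_denom_mono[OF irr, of "Suc (Suc m)"] by simp
  hence "\<bar>real q * x - cf_numer x (Suc (Suc m))\<bar> * real q \<le> 1"
    using cf_approx[OF irr, of "Suc m"] rq
    by (metis (no_types, opaque_lifting) abs_ge_zero mult_left_mono of_int_le_iff order_trans)
  hence e1: "\<bar>real q * x - cf_numer x (Suc (Suc m))\<bar> \<le> 1 / real q"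
    using qpos by (simp add: field_simps)
  have "\<bar>real_of_int (cf_denom x (Suc m)) * x - cf_numer x (Suc m)\<bar> * real q \<le> 1"
    using cf_approx[OF irr, of m] rq by simp
  hence e2: "\<bar>real_of_int (cf_denom x (Suc m)) * x - cf_numer x (Suc m)\<bar> \<le> 1 / real q"
    using qpos by (simp add: field_simps)
  have "\<bar>cf_numer x (Suc (Suc m)) * cf_denom x (Suc m) - int q * cf_numer x (Suc m)\<bar> = 1"
    using cf_det[of x "Suc m"] qm by (simp add: mult.commute)
  with q1 mono e1 e2 show ?thesis by (rule that)
qed

section \<open>Evaluating binary forms at a pair of polynomials\<close>

text \<open>A polynomial \<open>g = \<Sum> g_j T^j\<close> of degree \<open>\<le> m\<close> is read as the binary form
  \<open>G(X, Y) = \<Sum> g_j X^(m-j) Y^j\<close>; \<open>hom_eval u v m g\<close> is \<open>G(u, v)\<close>.\<close>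
definition hom_eval :: "real poly \<Rightarrow> real poly \<Rightarrow> nat \<Rightarrow> real poly \<Rightarrow> real poly" where
  "hom_eval u v m g = (\<Sum>j\<le>m. smult (coeff g j) (u ^ (m - j) * v ^ j))"

lemma smult_sum_right: "smult c (\<Sum>i\<in>A. f i) = (\<Sum>i\<in>A. smult c (f i))"
  by (induction A rule: infinite_finite_induct) (simp_all add: smult_add_right)

lemma hom_eval_add: "hom_eval u v m (f + g) = hom_eval u v m f + hom_eval u v m g"
  by (simp add: hom_eval_def sum.distrib smult_add_left)

lemma hom_eval_diff: "hom_eval u v m (f - g) = hom_eval u v m f - hom_eval u v m g"
  by (simp add: hom_eval_def sum_subtractf smult_diff_left)

lemma hom_eval_smult: "hom_eval u v m (smult c f) = smult c (hom_eval u v m f)"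
  by (simp add: hom_eval_def smult_sum_right)

lemma hom_eval_sum: "hom_eval u v m (\<Sum>i\<in>A. f i) = (\<Sum>i\<in>A. hom_eval u v m (f i))"
  by (induction A rule: infinite_finite_induct) (simp_all add: hom_eval_add hom_eval_def[of u v m 0])

lemma hom_eval_monom: "i \<le> m \<Longrightarrow> hom_eval u v m (monom c i) = smult c (u ^ (m - i) * v ^ i)"
  unfolding hom_eval_def by (simp add: if_distrib[of "\<lambda>a. smult a _"] sum.delta cong: if_cong)

lemma pcompose_power: "pcompose (p ^ k) r = (pcompose p r) ^ k"
  by (induction k) (simp_all add: pcompose_1 pcompose_mult)

lemma pcompose_hom_eval:
  "pcompose (hom_eval u v m g) r = hom_eval (pcompose u r) (pcompose v r) m g"
  by (simp add: hom_eval_def pcompose_sum pcompose_smult pcompose_mult pcompose_power)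

lemma degree_linear_powers: "degree ([:a, b:] ^ k * [:c, d:] ^ l :: real poly) \<le> k + l"
proof -
  have "degree ([:a, b:] ^ k :: real poly) \<le> k" "degree ([:c, d:] ^ l :: real poly) \<le> l"
    using degree_power_le[of "[:a, b:]" k] degree_power_le[of "[:c, d:]" l]
    by (auto intro: order_trans)
  thus ?thesis using degree_mult_le[of "[:a, b:] ^ k" "[:c, d:] ^ l"] by simp
qed

lemma degree_linear_powers_le:
  "k + l \<le> n \<Longrightarrow> degree ([:a, b:] ^ k * [:c, d:] ^ l :: real poly) \<le> n"
  using degree_linear_powers order_trans by blast

lemma hom_eval_mult_linear:
  assumes "degree g \<le> m"
  shows "hom_eval u v (Suc m) (g * [:a, b:]) = hom_eval u v m g * (smult a u + smult b v)"
proof -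
  have "hom_eval u v (Suc m) (smult a g) = (\<Sum>j\<le>m. smult (a * coeff g j) (u ^ (Suc m - j) * v ^ j))"
    using assms by (simp add: hom_eval_def coeff_eq_0)
  also have "\<dots> = (\<Sum>j\<le>m. smult (a * coeff g j) (u ^ (m - j) * v ^ j) * u)"
    by (intro sum.cong refl) (simp add: Suc_diff_le algebra_simps)
  finally have 1: "hom_eval u v (Suc m) (smult a g) = smult a (hom_eval u v m g) * u"
    by (simp add: hom_eval_def sum_distrib_right smult_sum_right mult_smult_left)
  have "hom_eval u v (Suc m) (pCons 0 (smult b g))
      = (\<Sum>i\<le>m. smult (b * coeff g i) (u ^ (m - i) * v ^ Suc i))"
    unfolding hom_eval_def by (subst sum.atMost_Suc_shift) simp
  also have "\<dots> = (\<Sum>i\<le>m. smult (b * coeff g i) (u ^ (m - i) * v ^ i) * v)"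
    by (intro sum.cong refl) (simp add: algebra_simps)
  finally have 2: "hom_eval u v (Suc m) (pCons 0 (smult b g)) = smult b (hom_eval u v m g) * v"
    by (simp add: hom_eval_def sum_distrib_right smult_sum_right mult_smult_left)
  have "g * [:a, b:] = smult a g + pCons 0 (smult b g)" by simp
  hence "hom_eval u v (Suc m) (g * [:a, b:])
      = smult a (hom_eval u v m g) * u + smult b (hom_eval u v m g) * v"
    by (simp only: hom_eval_add 1 2)
  then show ?thesis by (simp add: algebra_simps)
qed

lemma hom_eval_linear_powers:
  "hom_eval u v (k + l) ([:a, b:] ^ k * [:c, d:] ^ l)
     = (smult a u + smult b v) ^ k * (smult c u + smult d v) ^ l"
proof (induction k)
  case 0
  show ?case
  proof (induction l)
    case (Suc l)
    have "hom_eval u v (Suc l) ([:c, d:] ^ l * [:c, d:])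
        = hom_eval u v l ([:c, d:] ^ l) * (smult c u + smult d v)"
      using degree_linear_powers[of 0 0 0 c d l] by (intro hom_eval_mult_linear) simp
    then show ?case using Suc by (simp add: power_Suc2 del: power_Suc mult_pCons_right)
  qed (simp add: hom_eval_def)
next
  case (Suc k)
  have "hom_eval u v (Suc (k + l)) (([:a, b:] ^ k * [:c, d:] ^ l) * [:a, b:])
      = hom_eval u v (k + l) ([:a, b:] ^ k * [:c, d:] ^ l) * (smult a u + smult b v)"
    by (rule hom_eval_mult_linear[OF degree_linear_powers])
  moreover have "[:a, b:] ^ Suc k * [:c, d:] ^ l = ([:a, b:] ^ k * [:c, d:] ^ l) * [:a, b:]"
    by (simp add: algebra_simps)
  ultimately show ?case using Suc by (simp del: power_Suc mult_pCons_right) (simp add: algebra_simps)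
qed

text \<open>If \<open>u\<close>, \<open>v\<close> are linearly independent linear polynomials, a form of degree \<open>m\<close>
  vanishing at \<open>(u, v)\<close> is zero: away from the root of \<open>v\<close>, the quotient \<open>u/v\<close> takes
  infinitely many values, all of which are roots of the dehomogenised polynomial.\<close>
lemma hom_eval_eq_0_imp:
  fixes a1 b1 a2 b2 :: real
  assumes det: "a1 * b2 - a2 * b1 \<noteq> 0" and zero: "hom_eval [:a1, b1:] [:a2, b2:] m g = 0"
    and deg: "degree g \<le> m"
  shows "g = 0"
proof -
  define u where "u = [:a1, b1:]"
  define v where "v = [:a2, b2:]"
  define h where "h = (\<Sum>j\<le>m. monom (coeff g j) (m - j))"
  define D where "D = {t. poly v t \<noteq> 0}"
  define f where "f t = poly u t / poly v t" for t
  have "v \<noteq> 0" using det by (auto simp: v_def)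
  hence "finite (- D)" using poly_roots_finite by (simp add: D_def Compl_eq)
  hence infD: "infinite D" using infinite_UNIV_char_0 finite_Un by (metis Compl_partition)
  have "inj_on f D"
  proof (rule inj_onI)
    fix t1 t2 assume "t1 \<in> D" "t2 \<in> D" "f t1 = f t2"
    hence "poly u t1 * poly v t2 = poly u t2 * poly v t1" by (simp add: f_def D_def frac_eq_eq)
    hence "(a1 * b2 - a2 * b1) * (t2 - t1) = 0" by (simp add: u_def v_def algebra_simps)
    thus "t1 = t2" using det by simp
  qed
  hence "infinite (f ` D)" using infD finite_image_iff by blast
  moreover have "f ` D \<subseteq> {z. poly h z = 0}"
  proof
    fix z assume "z \<in> f ` D"
    then obtain t where t: "poly v t \<noteq> 0" "z = f t" by (auto simp: D_def)
    have key: "poly u t ^ (m - j) * poly v t ^ j = poly v t ^ m * z ^ (m - j)" if "j \<le> m" for j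
    proof -
      have "poly u t = z * poly v t" using t by (simp add: f_def)
      hence "poly u t ^ (m - j) * poly v t ^ j = z ^ (m - j) * (poly v t ^ (m - j) * poly v t ^ j)"
        by (simp add: power_mult_distrib)
      also have "\<dots> = z ^ (m - j) * poly v t ^ m" using that by (simp flip: power_add)
      finally show ?thesis by simp
    qed
    have "0 = poly (hom_eval u v m g) t" using zero by (simp add: u_def v_def)
    also have "\<dots> = (\<Sum>j\<le>m. coeff g j * (poly u t ^ (m - j) * poly v t ^ j))"
      by (simp add: hom_eval_def poly_sum)
    also have "\<dots> = (\<Sum>j\<le>m. poly v t ^ m * (coeff g j * z ^ (m - j)))"
      by (intro sum.cong refl) (simp add: key)
    also have "\<dots> = poly v t ^ m * poly h z"
      by (simp add: h_def poly_sum poly_monom sum_distrib_left)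
    finally show "z \<in> {z. poly h z = 0}" using t by simp
  qed
  ultimately have "h = 0" using poly_roots_finite finite_subset by blast
  show ?thesis
  proof (rule poly_eqI)
    fix i
    show "coeff g i = coeff 0 i"
    proof (cases "i \<le> m")
      case True
      have "coeff h (m - i) = (\<Sum>j\<le>m. if j = i then coeff g j else 0)"
        unfolding h_def coeff_sum coeff_monom by (intro sum.cong refl) (use True in auto)
      then show ?thesis using True \<open>h = 0\<close> by simp
    qed (use deg in \<open>simp add: coeff_eq_0\<close>)
  qed
qed

section \<open>Coefficient growth of products of linear factors\<close>

lemma coeff_mult_linear_bound:
  fixes f :: "real poly"
  assumes f: "\<And>k. \<bar>coeff f k\<bar> \<le> M" and a: "\<bar>a\<bar> \<le> A" and b: "\<bar>b\<bar> \<le> B"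
  shows "\<bar>coeff (f * [:a, b:]) k\<bar> \<le> (A + B) * M"
proof -
  have M: "M \<ge> 0" by (rule order_trans[OF abs_ge_zero f])
  have c: "coeff (f * [:a, b:]) k = a * coeff f k + (if k = 0 then 0 else b * coeff f (k - 1))"
    by (cases k) (simp_all add: mult.commute)
  have "\<bar>a * coeff f k\<bar> \<le> A * M" "\<bar>b * coeff f (k - 1)\<bar> \<le> B * M"
    unfolding abs_mult using a b f by (auto intro: mult_mono)
  moreover have "B * M \<ge> 0" using b M by simp
  ultimately have "\<bar>coeff (f * [:a, b:]) k\<bar> \<le> A * M + B * M"
    unfolding c by (auto intro: order_trans[OF abs_triangle_ineq])
  thus ?thesis by (simp add: algebra_simps)
qed

lemma coeff_mult_linear_power_bound:
  fixes f :: "real poly"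
  assumes f: "\<And>k. \<bar>coeff f k\<bar> \<le> M" and a: "\<bar>a\<bar> \<le> A" and b: "\<bar>b\<bar> \<le> B"
  shows "\<bar>coeff (f * [:a, b:] ^ j) k\<bar> \<le> (A + B) ^ j * M"
proof (induction j arbitrary: k)
  case (Suc j)
  have "\<bar>coeff ((f * [:a, b:] ^ j) * [:a, b:]) k\<bar> \<le> (A + B) * ((A + B) ^ j * M)"
    by (rule coeff_mult_linear_bound[OF Suc.IH a b])
  thus ?case by (simp add: algebra_simps)
qed (use f in simp)

lemma coeff_mult_linear_weighted:
  fixes Q :: real
  assumes Q: "Q > 0" and f: "\<And>k. \<bar>coeff f k\<bar> \<le> M * Q powi (2 * int k - int m)"
    and a: "\<bar>a\<bar> \<le> 1 / Q" and b: "\<bar>b\<bar> \<le> Q"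
  shows "\<bar>coeff (f * [:a, b:]) k\<bar> \<le> 2 * M * Q powi (2 * int k - int (Suc m))"
proof -
  define E where "E = Q powi (2 * int k - int (Suc m))"
  have "0 \<le> M * Q powi (2 * int 0 - int m)" using order_trans[OF abs_ge_zero f[of 0]] .
  hence M: "M \<ge> 0" using zero_less_power_int[OF Q, of "- int m"] by (auto simp: zero_le_mult_iff)
  have "Q powi (2 * int k - int m) = Q * E"
    using Q power_int_add[of Q 1 "2 * int k - int (Suc m)"] by (simp add: E_def)
  hence t1: "\<bar>a * coeff f k\<bar> \<le> (1 / Q) * (M * (Q * E))"
    unfolding abs_mult using a f[of k] Q by (intro mult_mono) auto
  have t2: "\<bar>b * coeff f (k - 1)\<bar> \<le> Q * (M * Q powi (2 * int (k - 1) - int m))"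
    unfolding abs_mult using b f[of "k - 1"] by (intro mult_mono) auto
  have "k \<noteq> 0 \<Longrightarrow> Q * Q powi (2 * int (k - 1) - int m) = E"
    using Q power_int_add[of Q 1 "2 * int (k - 1) - int m"] by (simp add: E_def of_nat_diff algebra_simps)
  moreover have "coeff (f * [:a, b:]) k = a * coeff f k + (if k = 0 then 0 else b * coeff f (k - 1))"
    by (cases k) (simp_all add: mult.commute)
  moreover have "0 \<le> M * E" using M Q by (simp add: E_def)
  ultimately have "\<bar>coeff (f * [:a, b:]) k\<bar> \<le> M * E + M * E"
    using t1 t2 Q by (auto intro: order_trans[OF abs_triangle_ineq] simp: algebra_simps)
  thus ?thesis by (simp add: E_def)
qed

lemma coeff_mult_linear_power_weighted:
  fixes Q :: real
  assumes Q: "Q > 0" and f: "\<And>k. \<bar>coeff f k\<bar> \<le> M * Q powi (2 * int k - int m)"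
    and a: "\<bar>a\<bar> \<le> 1 / Q" and b: "\<bar>b\<bar> \<le> Q"
  shows "\<bar>coeff (f * [:a, b:] ^ j) k\<bar> \<le> 2 ^ j * M * Q powi (2 * int k - int (m + j))"
proof (induction j arbitrary: k)
  case (Suc j)
  have "\<bar>coeff ((f * [:a, b:] ^ j) * [:a, b:]) k\<bar> \<le> 2 * (2 ^ j * M) * Q powi (2 * int k - int (Suc (m + j)))"
    by (rule coeff_mult_linear_weighted[OF Q _ a b]) (use Suc.IH in \<open>simp add: mult.assoc\<close>)
  thus ?case by (simp add: algebra_simps)
qed (use f in simp)

definition int_coeffs :: "real poly \<Rightarrow> bool" where
  "int_coeffs g \<longleftrightarrow> (\<forall>i. coeff g i \<in> \<int>)"

lemma int_polys_iff: "P \<in> int_polys n \<longleftrightarrow> degree P \<le> n \<and> int_coeffs P"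
  by (simp add: int_polys_def int_coeffs_def)

lemma int_coeffs_linear: "a \<in> \<int> \<Longrightarrow> b \<in> \<int> \<Longrightarrow> int_coeffs [:a, b:]"
  unfolding int_coeffs_def by (auto simp: coeff_pCons split: nat.split)

lemma int_coeffs_mult: "int_coeffs f \<Longrightarrow> int_coeffs g \<Longrightarrow> int_coeffs (f * g)"
  unfolding int_coeffs_def coeff_mult by (auto intro!: Ints_sum Ints_mult)

lemma int_coeffs_power: "int_coeffs f \<Longrightarrow> int_coeffs (f ^ k)"
  by (induction k) (simp_all add: int_coeffs_mult, simp add: int_coeffs_def coeff_1)

lemma int_coeffs_smult: "c \<in> \<int> \<Longrightarrow> int_coeffs f \<Longrightarrow> int_coeffs (smult c f)"
  unfolding int_coeffs_def by auto

lemma int_coeffs_sum: "(\<And>i. i \<in> A \<Longrightarrow> int_coeffs (f i)) \<Longrightarrow> int_coeffs (\<Sum>i\<in>A. f i)"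
  unfolding int_coeffs_def coeff_sum by (auto intro!: Ints_sum)

section \<open>The basis attached to a unimodular pair\<close>

text \<open>For integers with \<open>pr - qs = \<plusminus>1\<close> the linear polynomials \<open>U = qT - p\<close> and
  \<open>V = rT - s\<close> give the basis \<open>Q_j = U^(n-j) V^j\<close> of \<open>Z[T]_{\<le>n}\<close>.  Everything is
  stated after the shift \<open>T \<mapsto> T + x\<close>: \<open>U_at x\<close> and \<open>V_at x\<close> are \<open>U(T + x)\<close>, \<open>V(T + x)\<close>.\<close>
locale unimodular_pair =
  fixes p r s :: int and q :: nat
  assumes unimodular: "\<bar>p * r - int q * s\<bar> = 1"
begin

definition eps :: real where "eps = of_int (p * r - int q * s)"

lemma eps_square: "eps * eps = 1"
  using unimodular unfolding eps_def
  by (metis abs_mult_self_eq mult_cancel_right1 of_int_1 of_int_abs of_int_mult)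

lemma abs_eps: "\<bar>eps\<bar> = 1"
  using unimodular unfolding eps_def by (metis of_int_1 of_int_abs)

definition U_at :: "real \<Rightarrow> real poly" where "U_at x = [:real q * x - of_int p, real q:]"
definition V_at :: "real \<Rightarrow> real poly" where "V_at x = [:of_int r * x - of_int s, of_int r:]"

text \<open>The inverse substitution: the linear forms \<open>T_dual x\<close> and \<open>one_dual\<close> evaluate at
  \<open>(U_at x, V_at x)\<close> to \<open>T\<close> and to \<open>1\<close>.\<close>
definition T_dual :: "real \<Rightarrow> real poly" where
  "T_dual x = [:eps * (of_int r * x - of_int s), - eps * (real q * x - of_int p):]"
definition one_dual :: "real poly" where "one_dual = [:- eps * of_int r, eps * real q:]"

lemma T_dual_eval:
  "smult (eps * (of_int r * x - of_int s)) (U_at x) + smult (- eps * (real q * x - of_int p)) (V_at x) = [:0, 1:]"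
proof -
  have "eps * (of_int r * x - of_int s) * real q + - eps * (real q * x - of_int p) * of_int r = eps * eps"
    by (simp add: eps_def algebra_simps)
  then show ?thesis by (simp add: U_at_def V_at_def eps_square algebra_simps)
qed

lemma one_dual_eval: "smult (- eps * of_int r) (U_at x) + smult (eps * real q) (V_at x) = 1"
proof -
  have "- eps * of_int r * (real q * x - of_int p) + eps * real q * (of_int r * x - of_int s) = eps * eps"
    by (simp add: eps_def algebra_simps)
  then show ?thesis by (simp add: U_at_def V_at_def eps_square one_pCons)
qed

text \<open>The coordinates of \<open>P\<close>: the form obtained by substituting the inverse into \<open>P\<close>,
  homogenised in degree \<open>n\<close>.\<close>
definition coords :: "nat \<Rightarrow> real \<Rightarrow> real poly \<Rightarrow> real poly" where
  "coords n x P = (\<Sum>k\<le>n. smult (coeff P k) (T_dual x ^ k * one_dual ^ (n - k)))"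

definition basis_poly :: "nat \<Rightarrow> nat \<Rightarrow> real poly" where
  "basis_poly n j = U_at 0 ^ (n - j) * V_at 0 ^ j"

lemma degree_coords: "degree (coords n x P) \<le> n"
  unfolding coords_def T_dual_def one_dual_def
  by (intro degree_sum_le finite_atMost order.trans[OF degree_smult_le] degree_linear_powers_le) auto

lemma hom_eval_coords:
  assumes "degree P \<le> n"
  shows "hom_eval (U_at x) (V_at x) n (coords n x P) = P"
proof -
  have "hom_eval (U_at x) (V_at x) n (T_dual x ^ k * one_dual ^ (n - k)) = [:0, 1:] ^ k"
    if "k \<le> n" for k
  proof -
    have "hom_eval (U_at x) (V_at x) (k + (n - k)) (T_dual x ^ k * one_dual ^ (n - k))
        = [:0, 1:] ^ k * 1 ^ (n - k)"
      unfolding T_dual_def one_dual_def hom_eval_linear_powers T_dual_eval one_dual_eval ..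
    thus ?thesis using that by simp
  qed
  hence "hom_eval (U_at x) (V_at x) n (smult (coeff P k) (T_dual x ^ k * one_dual ^ (n - k)))
      = monom (coeff P k) k" if "k \<le> n" for k
    using that by (simp add: hom_eval_smult monom_altdef)
  hence "hom_eval (U_at x) (V_at x) n (coords n x P) = (\<Sum>k\<le>n. monom (coeff P k) k)"
    by (simp add: coords_def hom_eval_sum)
  also have "\<dots> = P" using poly_as_sum_of_monoms'[OF assms] .
  finally show ?thesis .
qed

lemma hom_eval_eq_0_iff:
  assumes "degree g \<le> n"
  shows "hom_eval (U_at x) (V_at x) n g = 0 \<longleftrightarrow> g = 0"
proof
  have "(real q * x - of_int p) * of_int r - (of_int r * x - of_int s) * real q = - eps"
    by (simp add: eps_def algebra_simps)
  hence det: "(real q * x - of_int p) * of_int r - (of_int r * x - of_int s) * real q \<noteq> 0"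
    using abs_eps by auto
  show "hom_eval (U_at x) (V_at x) n g = 0 \<Longrightarrow> g = 0"
    unfolding U_at_def V_at_def by (rule hom_eval_eq_0_imp[OF det _ assms])
qed (simp add: hom_eval_def)

text \<open>Coordinates are unique, hence do not depend on the point of expansion.\<close>
lemma coords_unique:
  assumes "degree g \<le> n" "hom_eval (U_at x) (V_at x) n g = P"
  shows "coords n x P = g"
proof -
  have "degree P \<le> n"
    using assms unfolding hom_eval_def U_at_def V_at_def
    by (auto intro!: degree_sum_le order.trans[OF degree_smult_le] degree_linear_powers_le)
  hence "hom_eval (U_at x) (V_at x) n (coords n x P - g) = 0"
    using assms(2) by (simp add: hom_eval_diff hom_eval_coords)
  moreover have "degree (coords n x P - g) \<le> n"
    by (intro degree_diff_le degree_coords assms(1))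
  ultimately show ?thesis by (simp add: hom_eval_eq_0_iff)
qed

lemma pcompose_U_at: "pcompose (U_at 0) [:x, 1:] = U_at x"
  by (simp add: U_at_def pcompose_pCons algebra_simps)

lemma pcompose_V_at: "pcompose (V_at 0) [:x, 1:] = V_at x"
  by (simp add: V_at_def pcompose_pCons algebra_simps)

lemma pcompose_basis_poly: "pcompose (basis_poly n j) [:x, 1:] = U_at x ^ (n - j) * V_at x ^ j"
  by (simp add: basis_poly_def pcompose_mult pcompose_power pcompose_U_at pcompose_V_at)

lemma int_coeffs_coords: "int_coeffs P \<Longrightarrow> int_coeffs (coords n 0 P)"
  unfolding coords_def T_dual_def one_dual_def
  by (intro int_coeffs_sum int_coeffs_smult int_coeffs_mult int_coeffs_power int_coeffs_linear)
     (auto simp: int_coeffs_def eps_def)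

lemma basis_poly_in_lattice: "j \<le> n \<Longrightarrow> basis_poly n j \<in> int_polys n"
  unfolding int_polys_iff basis_poly_def U_at_def V_at_def
  using degree_linear_powers[of _ _ "n - j" _ _ j]
  by (auto intro!: int_coeffs_mult int_coeffs_power int_coeffs_linear)

lemma sum_basis_poly: "(\<Sum>j\<le>n. smult (w j) (basis_poly n j)) = hom_eval (U_at 0) (V_at 0) n (\<Sum>j\<le>n. monom (w j) j)"
  by (simp add: hom_eval_sum hom_eval_monom basis_poly_def)

lemma basis_poly_independent:
  assumes "(\<Sum>j\<le>n. smult (w j) (basis_poly n j)) = 0" and "j \<le> n" shows "w j = 0"
proof -
  define g where "g = (\<Sum>j\<le>n. monom (w j) j)"
  have cg: "coeff g i = (if i \<le> n then w i else 0)" for i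
    unfolding g_def coeff_sum coeff_monom by (subst sum.delta) auto
  have "degree g \<le> n" by (rule degree_le) (auto simp: cg)
  moreover have "hom_eval (U_at 0) (V_at 0) n g = 0" using assms(1) by (simp add: g_def sum_basis_poly)
  ultimately have "g = 0" by (simp add: hom_eval_eq_0_iff)
  thus ?thesis using cg[of j] assms(2) by simp
qed

lemma inj_basis_poly: "inj_on (basis_poly n) {..n}"
proof (rule inj_onI, rule ccontr)
  fix a b assume a: "a \<in> {..n}" and b: "b \<in> {..n}" and eq: "basis_poly n a = basis_poly n b" and "a \<noteq> b"
  define w :: "nat \<Rightarrow> real" where "w j = (if j = a then 1 else 0) - (if j = b then 1 else 0)" for j
  have "(\<Sum>j\<le>n. smult (w j) (basis_poly n j)) = basis_poly n a - basis_poly n b"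
    using a b by (simp add: w_def smult_diff_left sum_subtractf if_distrib[of "\<lambda>c. smult c _"] sum.delta cong: if_cong)
  hence "w a = 0" using eq a by (intro basis_poly_independent) auto
  thus False using \<open>a \<noteq> b\<close> by (simp add: w_def)
qed

definition basis :: "nat \<Rightarrow> real poly set" where "basis n = basis_poly n ` {..n}"

lemma sum_basis: "(\<Sum>P\<in>basis n. f P) = (\<Sum>j\<le>n. f (basis_poly n j))"
  unfolding basis_def by (rule sum.reindex[OF inj_basis_poly, unfolded comp_def])

lemma card_basis: "card (basis n) = n + 1"
  unfolding basis_def by (simp add: card_image[OF inj_basis_poly])

lemma basis_real_indep: "real_lin_indep (basis n)"
  unfolding real_lin_indep_def
proof (intro conjI ballI allI impI)
  fix c :: "real poly \<Rightarrow> real" and P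
  assume "(\<Sum>P\<in>basis n. smult (c P) P) = 0" and "P \<in> basis n"
  moreover from this obtain j where "j \<le> n" "P = basis_poly n j" by (auto simp: basis_def)
  ultimately show "c P = 0"
    using basis_poly_independent[of "\<lambda>j. c (basis_poly n j)"] by (simp add: sum_basis)
qed (simp add: basis_def)

lemma basis_spans:
  assumes "P \<in> int_polys n"
  shows "\<exists>c::real poly \<Rightarrow> int. P = (\<Sum>B\<in>basis n. smult (of_int (c B)) B)"
proof -
  define g where "g = coords n 0 P"
  have ints: "coeff g j \<in> \<int>" for j
    using int_coeffs_coords assms by (simp add: g_def int_polys_iff int_coeffs_def)
  define c where "c B = \<lfloor>coeff g (the_inv_into {..n} (basis_poly n) B)\<rfloor>" for B
  have "(\<Sum>B\<in>basis n. smult (of_int (c B)) B) = (\<Sum>j\<le>n. smult (coeff g j) (basis_poly n j))"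
    unfolding sum_basis using ints
    by (intro sum.cong refl) (simp add: c_def the_inv_into_f_f[OF inj_basis_poly])
  also have "\<dots> = hom_eval (U_at 0) (V_at 0) n g" by (simp add: hom_eval_def basis_poly_def)
  also have "\<dots> = P" using assms hom_eval_coords by (simp add: g_def int_polys_iff)
  finally show ?thesis by metis
qed

lemma basis_is_Z_basis: "is_Z_basis (basis n) (int_polys n)"
  unfolding is_Z_basis_def
proof (intro conjI ballI allI impI basis_spans)
  show "basis n \<subseteq> int_polys n" using basis_poly_in_lattice by (auto simp: basis_def)
  fix c :: "real poly \<Rightarrow> int" and P
  assume "(\<Sum>P\<in>basis n. smult (of_int (c P)) P) = 0" and "P \<in> basis n"
  moreover from this obtain j where "j \<le> n" "P = basis_poly n j" by (auto simp: basis_def)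
  ultimately show "c P = 0"
    using basis_poly_independent[of "\<lambda>j. of_int (c (basis_poly n j))"] by (simp add: sum_basis)
qed (simp add: basis_def)

end

section \<open>Size of the basis and of coordinates near a convergent\<close>

text \<open>The weights \<open>Q^(2k-n)\<close> of \<open>C(q)\<close> exactly compensate \<open>k\<close> factors of size \<open>2/Q\<close>
  and \<open>n - k\<close> factors of size \<open>2Q\<close>.\<close>
lemma weight_balance:
  fixes Q :: real assumes Q: "Q > 0" and k: "k \<le> n"
  shows "Q powi (2 * int k - int n) * ((1 / Q + 1 / Q) ^ k * (Q + Q) ^ (n - k)) = 2 ^ n"
proof -
  have "Q powi (2 * int k - int n) = Q powi (int k - int (n - k))" using k by (simp add: of_nat_diff)
  also have "\<dots> = Q ^ k / Q ^ (n - k)" using Q by (simp add: power_int_diff)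
  finally have "Q powi (2 * int k - int n) = Q ^ k / Q ^ (n - k)" .
  moreover have "(2::real) ^ k * 2 ^ (n - k) = 2 ^ n" using k by (simp flip: power_add)
  ultimately show ?thesis using Q by (simp add: power_divide power_mult_distrib field_simps)
qed

locale convergent_pair = unimodular_pair +
  fixes \<xi> :: real
  assumes q_pos: "q \<ge> 1"
    and approx_p: "\<bar>real q * \<xi> - of_int p\<bar> \<le> 1 / real q"
    and approx_s: "\<bar>of_int r * \<xi> - of_int s\<bar> \<le> 1 / real q"
    and r_le_q: "\<bar>real_of_int r\<bar> \<le> real q"
begin

text \<open>\<open>|Q_j^[k](\<xi>)| \<le> 2^n q^(2k-n)\<close>: the Taylor coefficients at \<open>\<xi>\<close> of each factor
  \<open>U\<close>, \<open>V\<close> are at most \<open>1/q\<close> and \<open>q\<close>.\<close>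
lemma basis_poly_taylor_bound:
  assumes j: "j \<le> n"
  shows "\<bar>divided_deriv k (basis_poly n j) \<xi>\<bar> \<le> 2 ^ n * real q powi (2 * int k - int n)"
proof -
  have Q: "real q > 0" using q_pos by simp
  have "\<bar>coeff (1 :: real poly) k\<bar> \<le> 1 * real q powi (2 * int k - int 0)" for k
    by (cases k) auto
  hence "\<bar>coeff (1 * U_at \<xi> ^ (n - j)) k\<bar> \<le> 2 ^ (n - j) * 1 * real q powi (2 * int k - int (0 + (n - j)))" for k
    unfolding U_at_def by (rule coeff_mult_linear_power_weighted[OF Q _ approx_p]) simp
  hence "\<bar>coeff ((1 * U_at \<xi> ^ (n - j)) * V_at \<xi> ^ j) k\<bar>
      \<le> 2 ^ j * (2 ^ (n - j) * 1) * real q powi (2 * int k - int ((0 + (n - j)) + j))"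
    unfolding V_at_def[of \<xi>] by (rule coeff_mult_linear_power_weighted[OF Q _ approx_s r_le_q])
  moreover have "(2::real) ^ j * 2 ^ (n - j) = 2 ^ n" using j by (simp flip: power_add)
  ultimately show ?thesis using j by (simp add: divided_deriv_taylor pcompose_basis_poly)
qed

lemma basis_in_body: "basis n \<subseteq> scale_body (2 ^ n) (conv_body n \<xi> q)"
proof
  fix P assume "P \<in> basis n"
  then obtain j where j: "j \<le> n" and P: "P = basis_poly n j" by (auto simp: basis_def)
  have "degree P \<le> n" using basis_poly_in_lattice[OF j] by (simp add: P int_polys_iff)
  hence "smult (1 / 2 ^ n) P \<in> conv_body n \<xi> q"
    using basis_poly_taylor_bound[OF j] degree_smult_le[of "1 / 2 ^ n" P]
    by (auto simp: conv_body_def divided_deriv_smult abs_mult P field_simps)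
  moreover have "P = smult (2 ^ n) (smult (1 / 2 ^ n) P)" by simp
  ultimately show "P \<in> scale_body (2 ^ n) (conv_body n \<xi> q)" unfolding scale_body_def by blast
qed

text \<open>Conversely, if the Taylor coefficients of \<open>P\<close> at \<open>\<xi>\<close> satisfy the bounds of
  \<open>l C(q)\<close>, all its coordinates are at most \<open>(n+1) 2^n l\<close>: the dual forms have
  coefficients of size at most \<open>1/q\<close> and \<open>q\<close> as well.\<close>
lemma coords_bound:
  assumes l: "l \<ge> 0" and P: "\<And>k. k \<le> n \<Longrightarrow> \<bar>coeff P k\<bar> \<le> l * real q powi (2 * int k - int n)"
  shows "\<bar>coeff (coords n \<xi> P) i\<bar> \<le> (real n + 1) * 2 ^ n * l"
proof -
  have Q: "real q > 0" using q_pos by simp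
  have a1: "\<bar>eps * (of_int r * \<xi> - of_int s)\<bar> \<le> 1 / real q"
    and a2: "\<bar>- eps * (real q * \<xi> - of_int p)\<bar> \<le> 1 / real q"
    and a3: "\<bar>- eps * of_int r\<bar> \<le> real q" and a4: "\<bar>eps * real q\<bar> \<le> real q"
    using approx_p approx_s r_le_q by (simp_all add: abs_mult abs_eps)
  have term_bound: "\<bar>coeff P k * coeff (T_dual \<xi> ^ k * one_dual ^ (n - k)) i\<bar> \<le> 2 ^ n * l"
    if k: "k \<le> n" for k
  proof -
    have "\<bar>coeff (1 * T_dual \<xi> ^ k) i\<bar> \<le> (1 / real q + 1 / real q) ^ k * 1" for i
      unfolding T_dual_def by (rule coeff_mult_linear_power_bound[OF _ a1 a2]) (auto simp: coeff_1)
    hence "\<bar>coeff ((1 * T_dual \<xi> ^ k) * one_dual ^ (n - k)) i\<bar>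
        \<le> (real q + real q) ^ (n - k) * ((1 / real q + 1 / real q) ^ k * 1)"
      unfolding one_dual_def by (rule coeff_mult_linear_power_bound[OF _ a3 a4])
    hence "\<bar>coeff P k * coeff (T_dual \<xi> ^ k * one_dual ^ (n - k)) i\<bar>
        \<le> (l * real q powi (2 * int k - int n)) * ((1 / real q + 1 / real q) ^ k * (real q + real q) ^ (n - k))"
      unfolding abs_mult using P[OF k] by (intro mult_mono) (auto simp: mult.commute)
    also have "\<dots> = l * 2 ^ n" using weight_balance[OF Q k] by (simp add: mult.assoc)
    finally show ?thesis by (simp only: mult.commute)
  qed
  have "\<bar>coeff (coords n \<xi> P) i\<bar> \<le> (\<Sum>k\<le>n. \<bar>coeff P k * coeff (T_dual \<xi> ^ k * one_dual ^ (n - k)) i\<bar>)"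
    unfolding coords_def coeff_sum by (simp add: sum_abs)
  also have "\<dots> \<le> (\<Sum>k\<le>n. 2 ^ n * l)" by (intro sum_mono term_bound) simp
  finally show ?thesis by (simp add: algebra_simps)
qed

text \<open>A nonzero lattice point in \<open>l C(q)\<close> forces \<open>l \<ge> ((n+1) 2^n)^(-1)\<close>: its coordinates
  are integers, not all zero, and bounded by \<open>coords_bound\<close>.\<close>
lemma lattice_point_lower_bound:
  assumes PL: "P \<in> int_polys n" and P0: "P \<noteq> 0" and l: "l > 0"
    and PC: "P \<in> scale_body l (conv_body n \<xi> q)"
  shows "1 \<le> (real n + 1) * 2 ^ n * l"
proof -
  have degP: "degree P \<le> n" and intP: "int_coeffs P" using PL by (auto simp: int_polys_iff)
  define g where "g = coords n 0 P"
  have g_P: "hom_eval (U_at 0) (V_at 0) n g = P" unfolding g_def by (rule hom_eval_coords[OF degP])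
  have "hom_eval (U_at \<xi>) (V_at \<xi>) n g = pcompose (hom_eval (U_at 0) (V_at 0) n g) [:\<xi>, 1:]"
    by (simp add: pcompose_hom_eval pcompose_U_at pcompose_V_at)
  hence "hom_eval (U_at \<xi>) (V_at \<xi>) n g = pcompose P [:\<xi>, 1:]" by (simp only: g_P)
  hence g_eq: "g = coords n \<xi> (pcompose P [:\<xi>, 1:])"
    unfolding g_def by (rule coords_unique[symmetric, OF degree_coords])
  have "g \<noteq> 0" using g_P P0 by (auto simp: hom_eval_def)
  hence "1 \<le> \<bar>coeff g (degree g)\<bar>"
    using int_coeffs_coords[OF intP] by (intro Ints_nonzero_abs_ge1) (auto simp: g_def int_coeffs_def)
  also have "\<dots> \<le> (real n + 1) * 2 ^ n * l"
    unfolding g_eq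
  proof (rule coords_bound)
    obtain P1 where P1: "P1 \<in> conv_body n \<xi> q" "P = smult l P1"
      using PC by (auto simp: scale_body_def)
    show "\<bar>coeff (pcompose P [:\<xi>, 1:]) k\<bar> \<le> l * real q powi (2 * int k - int n)" if "k \<le> n" for k
      using P1 that l by (auto simp: conv_body_def divided_deriv_smult abs_mult divided_deriv_taylor[symmetric])
  qed (use l in simp)
  finally show ?thesis .
qed

end

section \<open>Successive minima\<close>

lemma succ_min_le:
  assumes "l > 0" "S \<subseteq> L \<inter> scale_body l C" "card S = i" "real_lin_indep S"
  shows "succ_min L C i \<le> l"
  unfolding succ_min_def
proof (rule cInf_lower)
  show "l \<in> {l. l > 0 \<and> (\<exists>S. S \<subseteq> L \<inter> scale_body l C \<and> card S = i \<and> real_lin_indep S)}"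
    using assms by blast
  show "bdd_below {l. l > 0 \<and> (\<exists>S. S \<subseteq> L \<inter> scale_body l C \<and> card S = i \<and> real_lin_indep S)}"
    by (rule bdd_belowI[of _ 0]) simp
qed

lemma real_lin_indep_nonzero:
  assumes "real_lin_indep S" shows "0 \<notin> S"
proof
  assume "0 \<in> S"
  have "\<forall>c. (\<Sum>P\<in>S. smult (c P) P) = 0 \<longrightarrow> (\<forall>P\<in>S. c P = 0)"
    using assms by (simp add: real_lin_indep_def)
  from spec[OF this, of "\<lambda>P. if P = 0 then 1 else 0"]
  have "\<forall>P\<in>S. (if P = 0 then 1 else 0 :: real) = 0" by (simp add: sum.neutral)
  with \<open>0 \<in> S\<close> show False by force
qed

lemma real_lin_indep_singleton: "real_lin_indep {P} \<longleftrightarrow> P \<noteq> 0"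
proof
  show "real_lin_indep {P} \<Longrightarrow> P \<noteq> 0" using real_lin_indep_nonzero by blast
  show "P \<noteq> 0 \<Longrightarrow> real_lin_indep {P}" by (simp add: real_lin_indep_def)
qed

text \<open>A lower bound for the scaling factor of every nonzero lattice point bounds \<open>\<lambda>_1\<close>
  from below (the witness makes the infimum one over a nonempty set).\<close>
lemma succ_min_1_ge:
  assumes witness: "l0 > 0" "P0 \<in> L \<inter> scale_body l0 C" "P0 \<noteq> 0"
    and bound: "\<And>l P. l > 0 \<Longrightarrow> P \<in> L \<inter> scale_body l C \<Longrightarrow> P \<noteq> 0 \<Longrightarrow> c \<le> l"
  shows "c \<le> succ_min L C 1"
  unfolding succ_min_def
proof (rule cInf_greatest)
  have "{P0} \<subseteq> L \<inter> scale_body l0 C \<and> card {P0} = 1 \<and> real_lin_indep {P0}"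
    using witness by (simp add: real_lin_indep_singleton)
  then show "{l. l > 0 \<and> (\<exists>S. S \<subseteq> L \<inter> scale_body l C \<and> card S = 1 \<and> real_lin_indep S)} \<noteq> {}"
    using witness(1) by blast
next
  fix l assume "l \<in> {l. l > 0 \<and> (\<exists>S. S \<subseteq> L \<inter> scale_body l C \<and> card S = 1 \<and> real_lin_indep S)}"
  then obtain S where l: "l > 0" and S: "S \<subseteq> L \<inter> scale_body l C" "card S = 1" "real_lin_indep S"
    by blast
  from S(2) obtain P where "S = {P}" by (rule card_1_singletonE)
  with l S show "c \<le> l" using bound real_lin_indep_singleton by blast
qed

lemma lower_constant_le: "(real n + 1) * 2 ^ n \<le> 2 ^ (n\<^sup>2) * fact (n + 1)"
proof -
  have "real (n + 1) \<le> real (fact (n + 1))" by (simp only: of_nat_le_iff fact_ge_self)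
  hence "real n + 1 \<le> fact (n + 1)" by (simp only: of_nat_fact of_nat_add of_nat_1)
  moreover have "(2::real) ^ n \<le> 2 ^ (n\<^sup>2)" by (rule power_increasing) (auto simp: power2_eq_square)
  ultimately have "(real n + 1) * 2 ^ n \<le> fact (n + 1) * (2::real) ^ (n\<^sup>2)" by (rule mult_mono) auto
  then show ?thesis by (simp only: mult.commute)
qed

theorem proposition1:
  fixes \<xi> :: real and n q :: nat
  assumes "\<xi> \<notin> \<rat>" and "n \<ge> 1" and "convergent_denominator \<xi> q"
  shows "succ_min (int_polys n) (conv_body n \<xi> q) (n + 1) \<le> 2 ^ n
       \<and> succ_min (int_polys n) (conv_body n \<xi> q) 1 \<ge> 1 / (2 ^ (n\<^sup>2) * fact (n + 1))
       \<and> (\<exists>B. B \<subseteq> scale_body (2 ^ n) (conv_body n \<xi> q) \<and> is_Z_basis B (int_polys n))"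
proof -
  obtain p r s where "q \<ge> 1" "0 \<le> r" "r \<le> int q"
    "\<bar>real q * \<xi> - real_of_int p\<bar> \<le> 1 / real q" "\<bar>real_of_int r * \<xi> - real_of_int s\<bar> \<le> 1 / real q"
    "\<bar>p * r - int q * s\<bar> = 1"
    using convergent_denominator_data[OF assms(1,3)] .
  then interpret convergent_pair p r s q \<xi> by unfold_locales auto
  have lattice: "basis n \<subseteq> int_polys n" using basis_is_Z_basis by (simp add: is_Z_basis_def)
  have upper: "succ_min (int_polys n) (conv_body n \<xi> q) (n + 1) \<le> 2 ^ n"
    by (rule succ_min_le[of _ "basis n"]) (use lattice basis_in_body card_basis basis_real_indep in auto)
  have "1 / (2 ^ (n\<^sup>2) * fact (n + 1)) \<le> succ_min (int_polys n) (conv_body n \<xi> q) 1"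
  proof (rule succ_min_1_ge)
    have "basis_poly n 0 \<in> basis n" by (simp add: basis_def)
    moreover have "0 \<notin> basis n" using basis_real_indep by (rule real_lin_indep_nonzero)
    ultimately show "basis_poly n 0 \<in> int_polys n \<inter> scale_body (2 ^ n) (conv_body n \<xi> q)" "basis_poly n 0 \<noteq> 0"
      using lattice basis_in_body by auto
  next
    fix l P assume "l > 0" "P \<in> int_polys n \<inter> scale_body l (conv_body n \<xi> q)" "P \<noteq> 0"
    hence "1 \<le> (real n + 1) * 2 ^ n * l" by (intro lattice_point_lower_bound) auto
    have "1 / (2 ^ (n\<^sup>2) * fact (n + 1)) \<le> 1 / ((real n + 1) * 2 ^ n)"
      using lower_constant_le[of n] by (intro divide_left_mono) auto
    also have "\<dots> \<le> l" using \<open>1 \<le> (real n + 1) * 2 ^ n * l\<close> by (simp add: divide_le_eq mult.commute)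
    finally show "1 / (2 ^ (n\<^sup>2) * fact (n + 1)) \<le> l" .
  qed simp
  then show ?thesis using upper basis_in_body basis_is_Z_basis by blast
qed

end
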